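(* Let $(H_i)_{i=0}^\infty = (2^{\alpha_i}3^{\beta_i})_{i=0}^\infty$ be the increasing enumeration of $\mathcal{H}=\{2^\alpha3^\beta : \alpha,\beta\in\mathbb{N}_0\}$, and define $f\colon\mathbb{N}_0\to\{+1,-1\}$ by $f(0)=+1$ and $f(n)=(-1)^{\alpha_i+\beta_i}$ for $n\in\{H_i,H_i+1,\dots,H_{i+1}-1\}$, $i\in\mathbb{N}_0$. Then $f$ is asymptotically $2$-automatic and asymptotically $3$-automatic.
   Context: $\mathbb{N}_0=\{0,1,2,\dots\}$. A property holds for almost all $n\in\mathbb{N}_0$ if the set of $n$ where it fails has upper density $\limsup_{N\to\infty}|\cdot\cap\{0,\dots,N-1\}|/N$ equal to $0$. Sequences $f,g$ are asymptotically equal, $f\simeq g$, if $f(n)=g(n)$ for almost all $n$. The $k$-kernel of $f$ is $\mathcal{N}_k(f) = \{ n \mapsto f(k^\alpha n + r) : \alpha, r \in \mathbb{N}_0,\ r < k^\alpha\}$; $f$ is asymptotically $k$-automatic if $\mathcal{N}_k(f)/{\simeq}$ is finite. *)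

theory Defs
  imports Complex_Main "HOL-Library.Infinite_Set" "HOL-Library.Liminf_Limsup"
    "HOL-Library.Extended_Real"
begin

definition upper_density :: "nat set \<Rightarrow> ereal" where
  "upper_density A = limsup (\<lambda>N. ereal (real (card (A \<inter> {..<N})) / real N))"

definition asym_eq :: "(nat \<Rightarrow> 'a) \<Rightarrow> (nat \<Rightarrow> 'a) \<Rightarrow> bool" where
  "asym_eq f g \<longleftrightarrow> upper_density {n. f n \<noteq> g n} = 0"

definition kernel :: "nat \<Rightarrow> (nat \<Rightarrow> 'a) \<Rightarrow> (nat \<Rightarrow> 'a) set" where
  "kernel k f = {(\<lambda>n. f (k ^ \<alpha> * n + r)) | \<alpha> r. r < k ^ \<alpha>}"

definition asym_automatic :: "nat \<Rightarrow> (nat \<Rightarrow> 'a) \<Rightarrow> bool" where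
  "asym_automatic k f \<longleftrightarrow> finite (kernel k f // {(g, h). asym_eq g h})"

definition hamming :: "nat set" where
  "hamming = {2 ^ a * 3 ^ b | a b. True}"

definition hamH :: "nat \<Rightarrow> nat" where
  "hamH i = enumerate hamming i"

definition hexp_alpha :: "nat \<Rightarrow> nat" where
  "hexp_alpha i = fst (THE (a, b). hamH i = 2 ^ a * 3 ^ b)"

definition hexp_beta :: "nat \<Rightarrow> nat" where
  "hexp_beta i = snd (THE (a, b). hamH i = 2 ^ a * 3 ^ b)"

definition f43 :: "nat \<Rightarrow> int" where
  "f43 n = (if n = 0 then 1 else
     (let i = (THE i. hamH i \<le> n \<and> n < hamH (Suc i)) in (-1) ^ (hexp_alpha i + hexp_beta i)))"

end

theory Submission
  imports Defs "HOL-Analysis.Kronecker_Approximation_Theorem" "HOL-Library.Log_Nat"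
    "HOL-Real_Asymp.Real_Asymp"
begin

(* For n \<ge> 1 the value f43 n is (-1)^(a + b), where 2^a 3^b = L n is the largest 3-smooth number
   not exceeding n.  Let {k, p} = {2, 3} and r < k.  Since k L n \<le> k n + r, we get
   L (k n + r) = k L n, and hence f43 (k n + r) = - f43 n, unless some smooth number lies in
   (k L n, k n + r]; such a number is a power p^y, since its quotient by k would be a smooth
   number above L n, hence above n.
   As log k / log p is irrational, Kronecker's theorem gives k^i in (p^j, (1 + \<epsilon>) p^j], and then
   k^i p^(y - j) is a smooth multiple of k just above p^y, which forces k n to lie within relative
   distance \<epsilon> below p^y.  Those n have density O(\<epsilon>), so f43 (k n + r) = - f43 n for almost all n,
   and every element f43 (k^a n + r) of the k-kernel is asymptotically equal to (-1)^a f43. *)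

definition zero_density :: "nat set \<Rightarrow> bool" where
  "zero_density A \<longleftrightarrow> (\<lambda>N. real (card (A \<inter> {..<N})) / real N) \<longlonglongrightarrow> 0"

lemma limsup_ereal_eq_0_iff:
  fixes x :: "nat \<Rightarrow> real"
  assumes "\<And>n. x n \<ge> 0"
  shows "limsup (\<lambda>n. ereal (x n)) = 0 \<longleftrightarrow> x \<longlonglongrightarrow> 0"
proof -
  have "0 \<le> liminf (\<lambda>n. ereal (x n))"
    by (rule Liminf_bounded) (simp add: assms)
  then have "limsup (\<lambda>n. ereal (x n)) = 0 \<longleftrightarrow> ((\<lambda>n. ereal (x n)) \<longlongrightarrow> 0) sequentially"
    using Liminf_le_Limsup[of sequentially "\<lambda>n. ereal (x n)"]
    by (auto simp: tendsto_iff_Liminf_eq_Limsup)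
  then show ?thesis
    by (simp add: zero_ereal_def)
qed

lemma upper_density_eq_0_iff: "upper_density A = 0 \<longleftrightarrow> zero_density A"
  unfolding upper_density_def zero_density_def by (rule limsup_ereal_eq_0_iff) simp

lemma zero_densityI:
  assumes "\<And>\<delta>. \<delta> > 0 \<Longrightarrow> \<forall>\<^sub>F N in sequentially. real (card (A \<inter> {..<N})) \<le> \<delta> * real N"
  shows "zero_density A"
  unfolding zero_density_def
proof (rule order_tendstoI)
  fix \<delta> :: real assume "\<delta> > 0"
  then have "\<forall>\<^sub>F N in sequentially. real (card (A \<inter> {..<N})) \<le> \<delta> / 2 * real N \<and> N > 0"
    by (intro eventually_conj assms eventually_gt_at_top) simp
  then show "\<forall>\<^sub>F N in sequentially. real (card (A \<inter> {..<N})) / real N < \<delta>"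
  proof eventually_elim
    case (elim N)
    then have "\<delta> / 2 * real N < \<delta> * real N"
      using \<open>\<delta> > 0\<close> by simp
    with elim show ?case
      by (simp add: divide_simps)
  qed
next
  fix a :: real assume "a < 0"
  then show "\<forall>\<^sub>F N in sequentially. a < real (card (A \<inter> {..<N})) / real N"
    by (intro always_eventually allI order.strict_trans2[OF _ divide_nonneg_nonneg]) auto
qed

lemma zero_density_sandwich:
  assumes "h \<longlonglongrightarrow> 0" "\<forall>\<^sub>F N in sequentially. real (card (A \<inter> {..<N})) / real N \<le> h N"
  shows "zero_density A"
  unfolding zero_density_def by (rule tendsto_sandwich[OF _ assms(2) tendsto_const assms(1)]) auto

lemma zero_density_subset: "zero_density B \<Longrightarrow> A \<subseteq> B \<Longrightarrow> zero_density A"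
  unfolding zero_density_def[of B]
  by (erule zero_density_sandwich, intro always_eventually allI divide_right_mono) (auto intro: card_mono)

lemma zero_density_Un:
  assumes "zero_density A" "zero_density B"
  shows "zero_density (A \<union> B)"
proof (rule zero_density_sandwich[OF tendsto_add_zero[OF assms[unfolded zero_density_def]]],
    intro always_eventually allI)
  fix N :: nat
  have "card ((A \<union> B) \<inter> {..<N}) \<le> card (A \<inter> {..<N}) + card (B \<inter> {..<N})"
    by (metis Int_Un_distrib2 card_Un_le)
  then show "real (card ((A \<union> B) \<inter> {..<N})) / real N
      \<le> real (card (A \<inter> {..<N})) / real N + real (card (B \<inter> {..<N})) / real N"
    by (simp add: add_divide_distrib[symmetric] divide_right_mono)
qed

lemma zero_density_finite: "finite A \<Longrightarrow> zero_density A"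
  by (rule zero_density_sandwich[where h = "\<lambda>N. real (card A) / real N"], real_asymp)
    (intro always_eventually allI divide_right_mono, auto intro: card_mono)

lemma zero_density_affine_preimage:
  assumes "zero_density A" "k > 0"
  shows "zero_density {n. k * n + r \<in> A}"
proof (rule zero_density_sandwich)
  define d where "d = (\<lambda>N. real (card (A \<inter> {..<N})) / real N)"
  have "(d \<circ> (\<lambda>N. k * N + r)) \<longlonglongrightarrow> 0"
    using assms unfolding zero_density_def d_def
    by (intro LIMSEQ_subseq_LIMSEQ) (auto simp: strict_mono_def)
  then show "(\<lambda>N. real (k + r) * d (k * N + r)) \<longlonglongrightarrow> 0"
    using tendsto_mult_right_zero by (auto simp: o_def)
  show "\<forall>\<^sub>F N in sequentially.
      real (card ({n. k * n + r \<in> A} \<inter> {..<N})) / real N \<le> real (k + r) * d (k * N + r)"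
    using eventually_gt_at_top[of 0]
  proof eventually_elim
    fix N :: nat assume "N > 0"
    have "(\<lambda>n. k * n + r) ` ({n. k * n + r \<in> A} \<inter> {..<N}) \<subseteq> A \<inter> {..<k * N + r}"
      using \<open>k > 0\<close> by auto
    moreover have "inj (\<lambda>n. k * n + r)"
      using \<open>k > 0\<close> by (auto simp: inj_def)
    ultimately have "card ({n. k * n + r \<in> A} \<inter> {..<N}) \<le> card (A \<inter> {..<k * N + r})"
      by (metis card_image card_mono finite_Int finite_lessThan inj_on_subset subset_UNIV)
    then have "real (card ({n. k * n + r \<in> A} \<inter> {..<N})) / real N
        \<le> real (card (A \<inter> {..<k * N + r})) / real N"
      by (simp add: divide_right_mono)
    also have "\<dots> = real (k * N + r) / real N * d (k * N + r)"
      using \<open>k > 0\<close> \<open>N > 0\<close> by (simp add: d_def del: of_nat_add of_nat_mult)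
    also have "\<dots> \<le> real (k + r) * d (k * N + r)"
    proof (rule mult_right_mono)
      have "k * N + r \<le> (k + r) * N"
        using \<open>N > 0\<close> by (simp add: algebra_simps)
      then have "real (k * N + r) \<le> real (k + r) * real N"
        by (metis of_nat_mono of_nat_mult)
      then show "real (k * N + r) / real N \<le> real (k + r)"
        using \<open>N > 0\<close> by (simp add: divide_simps)
    qed (simp add: d_def)
    finally show "real (card ({n. k * n + r \<in> A} \<inter> {..<N})) / real N
        \<le> real (k + r) * d (k * N + r)" .
  qed
qed

lemma asym_eq_iff_zero_density: "asym_eq f g \<longleftrightarrow> zero_density {n. f n \<noteq> g n}"
  unfolding asym_eq_def upper_density_eq_0_iff ..

lemma asym_eq_refl: "asym_eq f f"
  unfolding asym_eq_iff_zero_density by (simp add: zero_density_finite)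

lemma asym_eq_sym: "asym_eq f g \<Longrightarrow> asym_eq g f"
  unfolding asym_eq_iff_zero_density by (metis (mono_tags) Collect_cong)

lemma asym_eq_trans: "asym_eq f g \<Longrightarrow> asym_eq g h \<Longrightarrow> asym_eq f h"
  unfolding asym_eq_iff_zero_density
  by (erule zero_density_subset[OF zero_density_Un]) auto

lemma asym_eq_kernel_element:
  fixes f :: "nat \<Rightarrow> 'a :: comm_ring_1"
  assumes "k > 0" and flip: "\<And>r. r < k \<Longrightarrow> asym_eq (\<lambda>n. f (k * n + r)) (\<lambda>n. - f n)"
  shows "r < k ^ a \<Longrightarrow> asym_eq (\<lambda>n. f (k ^ a * n + r)) (\<lambda>n. (-1) ^ a * f n)"
proof (induction a arbitrary: r)
  case 0
  then show ?case by (simp add: asym_eq_refl)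
next
  case (Suc a)
  define b where "b = r div k ^ a"
  define r' where "r' = r mod k ^ a"
  have "r' < k ^ a"
    using \<open>k > 0\<close> by (simp add: r'_def)
  have "b < k"
    using Suc.prems \<open>k > 0\<close> by (simp add: b_def less_mult_imp_div_less mult.commute)
  have split: "k * k ^ a * n + r = k ^ a * (k * n + b) + r'" for n
    by (simp add: b_def r'_def algebra_simps)
  have "zero_density {n. k * n + b \<in> {m. f (k ^ a * m + r') \<noteq> (-1) ^ a * f m}}"
    using Suc.IH[OF \<open>r' < k ^ a\<close>] \<open>k > 0\<close>
    by (intro zero_density_affine_preimage) (simp_all add: asym_eq_iff_zero_density)
  moreover have "zero_density {n. f (k * n + b) \<noteq> - f n}"
    using flip[OF \<open>b < k\<close>] by (simp add: asym_eq_iff_zero_density)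
  ultimately show ?case
    unfolding asym_eq_iff_zero_density
    by (rule zero_density_subset[OF zero_density_Un]) (auto simp: split)
qed

lemma asym_automatic_if_asym_eq_neg:
  fixes f :: "nat \<Rightarrow> 'a :: comm_ring_1"
  assumes "k > 0" and flip: "\<And>r. r < k \<Longrightarrow> asym_eq (\<lambda>n. f (k * n + r)) (\<lambda>n. - f n)"
  shows "asym_automatic k f"
proof -
  define R where "R = {(g :: nat \<Rightarrow> 'a, h). asym_eq g h}"
  have class_eq: "R `` {g} = R `` {h}" if "asym_eq g h" for g h
    using that asym_eq_sym asym_eq_trans unfolding R_def by blast
  have "kernel k f // R \<subseteq> {R `` {f}, R `` {\<lambda>n. - f n}}"
  proof
    fix X assume "X \<in> kernel k f // R"
    then obtain a r where "r < k ^ a" and X: "X = R `` {\<lambda>n. f (k ^ a * n + r)}"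
      unfolding quotient_def kernel_def by blast
    then have "X = R `` {\<lambda>n. (-1) ^ a * f n}"
      using class_eq asym_eq_kernel_element[OF assms] by blast
    then show "X \<in> {R `` {f}, R `` {\<lambda>n. - f n}}"
      by (cases "even a") auto
  qed
  then show ?thesis
    unfolding asym_automatic_def R_def by (rule finite_subset) simp
qed

definition mult_powers :: "nat \<Rightarrow> nat \<Rightarrow> nat set" where
  "mult_powers k p = {k ^ x * p ^ y | x y. True}"

(* Unspecified if no element of S is \<le> n, e.g. for n = 0 and S = mult_powers k p. *)
definition largest_le :: "nat set \<Rightarrow> nat \<Rightarrow> nat" where
  "largest_le S n = Max {s \<in> S. s \<le> n}"

lemma power_mult_power_in_mult_powers: "k ^ x * p ^ y \<in> mult_powers k p"
  unfolding mult_powers_def by blast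

lemma one_in_mult_powers: "1 \<in> mult_powers k p"
  using power_mult_power_in_mult_powers[of k 0 p 0] by simp

lemma mult_in_mult_powers: "s \<in> mult_powers k p \<Longrightarrow> k * s \<in> mult_powers k p"
  unfolding mult_powers_def by clarsimp (metis mult.assoc power_Suc)

lemma mult_powers_pos: "s \<in> mult_powers k p \<Longrightarrow> k > 0 \<Longrightarrow> p > 0 \<Longrightarrow> s > 0"
  unfolding mult_powers_def by auto

lemma mult_powers_commute: "mult_powers k p = mult_powers p k"
  unfolding mult_powers_def by (auto simp: mult.commute)

lemma largest_le_in: "s \<in> S \<Longrightarrow> s \<le> n \<Longrightarrow> largest_le S n \<in> S"
  unfolding largest_le_def using Max_in[of "{s \<in> S. s \<le> n}"] by fastforce

lemma largest_le_le: "s \<in> S \<Longrightarrow> s \<le> n \<Longrightarrow> largest_le S n \<le> n"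
  unfolding largest_le_def using Max_in[of "{s \<in> S. s \<le> n}"] by fastforce

lemma le_largest_le: "s \<in> S \<Longrightarrow> s \<le> n \<Longrightarrow> s \<le> largest_le S n"
  unfolding largest_le_def by (rule Max_ge) auto

lemma largest_le_mult_cases:
  fixes k p :: nat
  assumes "k > 0" "p > 0" "n \<ge> 1" "r < k"
  shows "largest_le (mult_powers k p) (k * n + r) = k * largest_le (mult_powers k p) n
    \<or> (\<exists>y. k * largest_le (mult_powers k p) n < p ^ y \<and> p ^ y \<le> k * n + r)"
proof -
  let ?S = "mult_powers k p"
  define m where "m = largest_le ?S n"
  define s where "s = largest_le ?S (k * n + r)"
  have "m \<in> ?S" "m \<le> n"
    unfolding m_def using one_in_mult_powers \<open>n \<ge> 1\<close> by (rule largest_le_in, rule largest_le_le)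
  then have "k * m \<in> ?S" "k * m \<le> k * n + r"
    by (auto intro: mult_in_mult_powers trans_le_add1)
  then have "k * m \<le> s" "s \<in> ?S" "s \<le> k * n + r"
    unfolding s_def by (auto intro: le_largest_le largest_le_in largest_le_le)
  then obtain x y where xy: "s = k ^ x * p ^ y"
    unfolding mult_powers_def by blast
  have no_factor_k: "x = 0" if "k * m < s"
  proof (rule ccontr)
    assume "x \<noteq> 0"
    define t where "t = k ^ (x - 1) * p ^ y"
    have "s = k * t"
      using \<open>x \<noteq> 0\<close> by (simp add: xy t_def power_eq_if)
    then have "m < t"
      using that by simp
    have "t \<in> ?S"
      unfolding t_def by (rule power_mult_power_in_mult_powers)
    then have "n < t"
      using \<open>m < t\<close> le_largest_le[of t ?S n] unfolding m_def by linarith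
    then have "k * n + k \<le> s"
      using \<open>s = k * t\<close> mult_le_mono2[of "Suc n" t k] by simp
    then show False
      using \<open>s \<le> k * n + r\<close> \<open>r < k\<close> by linarith
  qed
  show ?thesis
  proof (cases "s = k * m")
    case False
    then have "k * m < s"
      using \<open>k * m \<le> s\<close> by simp
    then show ?thesis
      using no_factor_k \<open>s \<le> k * n + r\<close> xy unfolding m_def by auto
  qed (simp add: m_def s_def)
qed

lemma near_power_if_largest_le_gap:
  fixes k p :: nat
  assumes "k \<ge> 2" "p \<ge> 2"
    and approx: "real (p ^ j) < real (k ^ i)" "real (k ^ i) \<le> (1 + \<epsilon>) * real (p ^ j)"
    and "p ^ j \<le> n" and gap: "k * largest_le (mult_powers k p) n < p ^ y"
  shows "real (k * n) < (1 + \<epsilon>) * real (p ^ y)"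
proof -
  let ?S = "mult_powers k p"
  define m where "m = largest_le ?S n"
  have "n \<ge> 1"
    using \<open>p ^ j \<le> n\<close> \<open>p \<ge> 2\<close> one_le_power[of p j] by linarith
  with one_in_mult_powers have "m \<in> ?S"
    unfolding m_def by (rule largest_le_in)
  then have "m > 0" "k * m \<in> ?S"
    using assms(1,2) by (auto intro: mult_powers_pos mult_in_mult_powers)
  have above_n: "n < u" if "u \<in> ?S" "m < u" for u
    using le_largest_le[OF that(1), of n] that(2) unfolding m_def by linarith
  have "n < k * m"
    using above_n[OF \<open>k * m \<in> ?S\<close>] \<open>m > 0\<close> \<open>k \<ge> 2\<close> by simp
  then have "p ^ j < p ^ y"
    using \<open>p ^ j \<le> n\<close> gap unfolding m_def by linarith
  then have "j < y"
    using \<open>p \<ge> 2\<close> by (simp add: power_less_imp_less_exp)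
  have "p ^ j < k ^ i"
    using approx(1) by linarith
  then have "i > 0"
    using \<open>p \<ge> 2\<close> by (cases i) auto
  \<comment> \<open>k u = k^i p^(y - j) is a smooth multiple of k in (p^y, (1 + \<epsilon>) p^y]\<close>
  define u where "u = k ^ (i - 1) * p ^ (y - j)"
  have ku: "real (k * u) = real (k ^ i) * real (p ^ (y - j))"
    using \<open>i > 0\<close> by (simp add: u_def power_eq_if)
  have py: "real (p ^ y) = real (p ^ j) * real (p ^ (y - j))"
    using \<open>j < y\<close> by (simp flip: power_add)
  have "real (p ^ y) < real (k * u)"
    unfolding ku py using approx(1) \<open>p \<ge> 2\<close> by simp
  then have "k * m < k * u"
    using gap unfolding m_def by linarith
  then have "n < u"
    using above_n[OF _] power_mult_power_in_mult_powers unfolding u_def by auto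
  then have "real (k * n) < real (k * u)"
    using \<open>k \<ge> 2\<close> by simp
  also have "\<dots> \<le> (1 + \<epsilon>) * real (p ^ y)"
    unfolding ku py using approx(2) \<open>p \<ge> 2\<close> by (simp add: mult.assoc)
  finally show ?thesis .
qed

definition near_powers :: "nat \<Rightarrow> nat \<Rightarrow> real \<Rightarrow> nat set" where
  "near_powers k p \<epsilon> = {n. \<exists>y. p ^ y < k * (n + 1) \<and> real (k * n) < (1 + \<epsilon>) * real (p ^ y)}"

lemma largest_le_mult_exceptions_subset:
  fixes k p :: nat
  assumes "k \<ge> 2" "p \<ge> 2" "r < k"
    and approx: "real (p ^ j) < real (k ^ i)" "real (k ^ i) \<le> (1 + \<epsilon>) * real (p ^ j)"
  shows "{n. largest_le (mult_powers k p) (k * n + r) \<noteq> k * largest_le (mult_powers k p) n}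
    \<subseteq> {..<p ^ j} \<union> near_powers k p \<epsilon>"
proof
  fix n assume n: "n \<in> {n. largest_le (mult_powers k p) (k * n + r) \<noteq> k * largest_le (mult_powers k p) n}"
  show "n \<in> {..<p ^ j} \<union> near_powers k p \<epsilon>"
  proof (cases "p ^ j \<le> n")
    case True
    then have "n \<ge> 1"
      using \<open>p \<ge> 2\<close> one_le_power[of p j] by linarith
    then obtain y where y: "k * largest_le (mult_powers k p) n < p ^ y" "p ^ y \<le> k * n + r"
      using largest_le_mult_cases[of k p n r] n assms(1-3) by auto
    then have "real (k * n) < (1 + \<epsilon>) * real (p ^ y)"
      using near_power_if_largest_le_gap[OF assms(1,2) approx True] by blast
    moreover have "p ^ y < k * (n + 1)"
      using y(2) \<open>r < k\<close> by simp
    ultimately show ?thesis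
      unfolding near_powers_def by blast
  qed simp
qed

lemma finite_real_interval: "finite {n :: nat. a < real n \<and> real n < b}"
proof -
  obtain m :: nat where "b < real m"
    using reals_Archimedean2 by blast
  then have "{n :: nat. a < real n \<and> real n < b} \<subseteq> {..<m}"
    by auto
  then show ?thesis
    by (rule finite_subset) simp
qed

lemma card_real_interval_le:
  fixes a b :: real
  assumes "a \<le> b"
  shows "real (card {n :: nat. a < real n \<and> real n < b}) \<le> b - a + 1"
proof -
  have "int ` {n :: nat. a < real n \<and> real n < b} \<subseteq> {\<lfloor>a\<rfloor><..<\<lceil>b\<rceil>}"
    by (auto simp: floor_less_iff less_ceiling_iff)
  then have "card {n :: nat. a < real n \<and> real n < b} \<le> card {\<lfloor>a\<rfloor><..<\<lceil>b\<rceil>}"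
    by (metis card_image card_mono finite_greaterThanLessThan_int inj_of_nat inj_on_subset
        subset_UNIV)
  also have "\<dots> = nat (\<lceil>b\<rceil> - \<lfloor>a\<rfloor> - 1)"
    by simp
  finally show ?thesis
    using assms ceiling_correct[of b] floor_correct[of a] by linarith
qed

lemma sum_powers_less_power: "(p :: nat) \<ge> 2 \<Longrightarrow> (\<Sum>y<w. p ^ y) < p ^ w"
proof (induction w)
  case (Suc w)
  then have "(\<Sum>y<Suc w. p ^ y) < 2 * p ^ w"
    by simp
  also have "\<dots> \<le> p ^ Suc w"
    using Suc.prems by simp
  finally show ?case .
qed simp

lemma card_near_powers_le:
  fixes k p N :: nat
  assumes "k > 0" "p \<ge> 2" "\<epsilon> \<ge> 0" "N > 0"
  shows "real (card (near_powers k p \<epsilon> \<inter> {..<N}))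
    \<le> \<epsilon> * real (p * k * N) + 2 * (log p (real (k * N)) + 1)"
proof -
  define w where "w = floorlog p (k * N)"
  define I where "I y = {n :: nat. real (p ^ y) / k - 1 < real n \<and> real n < (1 + \<epsilon>) * real (p ^ y) / k}"
    for y
  have cover: "near_powers k p \<epsilon> \<inter> {..<N} \<subseteq> (\<Union>y<w. I y)"
  proof
    fix n assume "n \<in> near_powers k p \<epsilon> \<inter> {..<N}"
    then obtain y where y: "p ^ y < k * (n + 1)" "real (k * n) < (1 + \<epsilon>) * real (p ^ y)" "n < N"
      unfolding near_powers_def by blast
    have "k * (n + 1) \<le> k * N"
      using y(3) by (intro mult_le_mono2) simp
    then have "Suc y \<le> w"
      unfolding w_def using y(1) \<open>p \<ge> 2\<close> by (intro floorlog_ge_SucI) simp_all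
    moreover have "real (p ^ y) < real k * (real n + 1)"
      using y(1) of_nat_less_iff[of "p ^ y" "k * (n + 1)", where 'a = real] by (simp add: algebra_simps)
    then have "real (p ^ y) / k - 1 < real n"
      using \<open>k > 0\<close> by (simp add: divide_less_eq algebra_simps)
    moreover have "real n < (1 + \<epsilon>) * real (p ^ y) / k"
      using y(2) \<open>k > 0\<close> by (simp add: less_divide_eq mult.commute)
    ultimately show "n \<in> (\<Union>y<w. I y)"
      unfolding I_def by auto
  qed
  have card_I: "real (card (I y)) \<le> \<epsilon> * real (p ^ y) + 2" for y
  proof -
    have "real (card (I y)) \<le> (1 + \<epsilon>) * real (p ^ y) / k - (real (p ^ y) / k - 1) + 1"
      unfolding I_def using assms by (intro card_real_interval_le) (simp add: field_simps)
    also have "\<dots> = \<epsilon> * real (p ^ y) / k + 2"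
      using \<open>k > 0\<close> by (simp add: field_simps)
    also have "\<epsilon> * real (p ^ y) / k \<le> \<epsilon> * real (p ^ y) / 1"
      using assms by (intro divide_left_mono) simp_all
    finally show ?thesis
      by simp
  qed
  have "card (near_powers k p \<epsilon> \<inter> {..<N}) \<le> card (\<Union>y<w. I y)"
    using cover by (intro card_mono) (simp_all add: I_def finite_real_interval)
  also have "\<dots> \<le> (\<Sum>y<w. card (I y))"
    by (rule card_UN_le) simp
  finally have "real (card (near_powers k p \<epsilon> \<inter> {..<N})) \<le> (\<Sum>y<w. real (card (I y)))"
    by (metis of_nat_mono of_nat_sum)
  also have "\<dots> \<le> (\<Sum>y<w. \<epsilon> * real (p ^ y) + 2)"
    by (intro sum_mono card_I)
  also have "\<dots> = \<epsilon> * real (\<Sum>y<w. p ^ y) + 2 * real w"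
    by (simp add: sum.distrib sum_distrib_left)
  also have "\<dots> \<le> \<epsilon> * real (p * k * N) + 2 * (log p (real (k * N)) + 1)"
  proof (rule add_mono)
    have "p ^ (w - 1) \<le> k * N"
      unfolding w_def using floorlog_bounds[of "k * N" p] assms by simp
    then have "p ^ w \<le> p * (k * N)"
      using assms by (cases w) auto
    then have "(\<Sum>y<w. p ^ y) \<le> p * k * N"
      using sum_powers_less_power[OF \<open>p \<ge> 2\<close>, of w] by (simp add: mult.assoc)
    then show "\<epsilon> * real (\<Sum>y<w. p ^ y) \<le> \<epsilon> * real (p * k * N)"
      using \<open>\<epsilon> \<ge> 0\<close> by (intro mult_left_mono of_nat_mono)
    have "w = nat \<lfloor>log p (real (k * N))\<rfloor> + 1" "log p (real (k * N)) \<ge> 0"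
      unfolding w_def floorlog_def using assms mult_mono[of 1 "real k" 1 "real N"] by simp_all
    then show "2 * real w \<le> 2 * (log p (real (k * N)) + 1)"
      using floor_correct[of "log p (real (k * N))"] by simp
  qed
  finally show ?thesis .
qed

lemma ln_div_ln_irrational:
  fixes k p :: nat
  assumes "coprime k p" "k \<ge> 2" "p \<ge> 2"
  shows "ln k / ln p \<notin> \<rat>"
proof
  assume "ln k / ln p \<in> \<rat>"
  then obtain a b :: int where "b > 0" and ab: "ln k / ln p = of_int a / of_int b"
    by (rule Rats_cases') blast
  have "ln k > 0" "ln p > 0"
    using assms by simp_all
  then have "real_of_int a / real_of_int b > 0"
    using ab by (metis divide_pos_pos)
  then have "a > 0"
    using \<open>b > 0\<close> by (simp add: zero_less_divide_iff)
  have "real (nat b) * ln k = real (nat a) * ln p"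
    using ab \<open>b > 0\<close> \<open>a > 0\<close> \<open>ln p > 0\<close> by (simp add: field_simps)
  then have "real (k ^ nat b) = real (p ^ nat a)"
    using assms by (simp add: ln_realpow[symmetric])
  then have "k ^ nat b = p ^ nat a"
    by (simp only: of_nat_eq_iff)
  moreover have "coprime (k ^ nat b) (p ^ nat a)"
    using \<open>coprime k p\<close> by simp
  ultimately have "k ^ nat b = 1"
    by simp
  then show False
    using \<open>b > 0\<close> \<open>k \<ge> 2\<close> by simp
qed

lemma power_slightly_above_power:
  fixes k p :: nat
  assumes "coprime k p" "k \<ge> 2" "p \<ge> 2" "\<epsilon> > 0"
  obtains i j where "real (p ^ j) < real (k ^ i)" "real (k ^ i) \<le> (1 + \<epsilon>) * real (p ^ j)"
proof -
  define \<theta> where "\<theta> = ln k / ln p"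
  define \<eta> where "\<eta> = min 1 (ln (1 + \<epsilon>) / ln p)"
  have "ln p > 0" "ln k > 0" "\<theta> \<ge> 0"
    using assms by (simp_all add: \<theta>_def)
  then have "\<eta> > 0" "\<eta> \<le> 1"
    using \<open>\<epsilon> > 0\<close> by (simp_all add: \<eta>_def)
  obtain i where "i > 0" and i: "\<bar>frac (real i * \<theta>) - \<eta> / 2\<bar> < \<eta> / 2"
    using Kronecker_approx_1_explicit[of \<theta> "\<eta> / 2" "\<eta> / 2"] ln_div_ln_irrational[OF assms(1-3)]
      \<open>\<eta> > 0\<close> \<open>\<eta> \<le> 1\<close> unfolding \<theta>_def by auto
  define \<phi> where "\<phi> = frac (real i * \<theta>)"
  define j where "j = nat \<lfloor>real i * \<theta>\<rfloor>"
  have "0 < \<phi>" "\<phi> < \<eta>"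
    using i unfolding \<phi>_def by linarith+
  have "real i * \<theta> = real j + \<phi>"
    using \<open>\<theta> \<ge> 0\<close> by (simp add: j_def \<phi>_def frac_def)
  then have "real i * ln k = real j * ln p + \<phi> * ln p"
    using \<open>ln p > 0\<close> by (simp add: \<theta>_def field_simps)
  then have "exp (real i * ln k) = exp (real j * ln p) * exp (\<phi> * ln p)"
    by (simp add: exp_add)
  then have power_eq: "real (k ^ i) = real (p ^ j) * exp (\<phi> * ln p)"
    using assms by (simp add: exp_of_nat_mult)
  have "1 < exp (\<phi> * ln p)"
    using \<open>0 < \<phi>\<close> \<open>ln p > 0\<close> by simp
  have "\<phi> * ln p \<le> ln (1 + \<epsilon>)"
    using \<open>\<phi> < \<eta>\<close> \<open>ln p > 0\<close> unfolding \<eta>_def by (simp add: field_simps)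
  then have "exp (\<phi> * ln p) \<le> 1 + \<epsilon>"
    using \<open>\<epsilon> > 0\<close> by (metis exp_le_cancel_iff exp_ln add_pos_pos zero_less_one)
  have "real (p ^ j) > 0"
    using assms by simp
  show ?thesis
  proof (rule that)
    show "real (p ^ j) < real (k ^ i)"
      unfolding power_eq using mult_strict_left_mono[OF \<open>1 < exp (\<phi> * ln p)\<close> \<open>real (p ^ j) > 0\<close>]
      by simp
    show "real (k ^ i) \<le> (1 + \<epsilon>) * real (p ^ j)"
      unfolding power_eq using mult_left_mono[OF \<open>exp (\<phi> * ln p) \<le> 1 + \<epsilon>\<close>, of "real (p ^ j)"]
      by (simp add: mult.commute)
  qed
qed

lemma zero_density_largest_le_mult_ne:
  fixes k p :: nat
  assumes "coprime k p" "k \<ge> 2" "p \<ge> 2" "r < k"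
  shows "zero_density
    {n. largest_le (mult_powers k p) (k * n + r) \<noteq> k * largest_le (mult_powers k p) n}"
    (is "zero_density ?B")
proof (rule zero_densityI)
  fix \<delta> :: real assume "\<delta> > 0"
  define \<epsilon> where "\<epsilon> = \<delta> / (2 * p * k)"
  have "\<epsilon> > 0"
    using \<open>\<delta> > 0\<close> assms by (simp add: \<epsilon>_def)
  obtain i j where approx: "real (p ^ j) < real (k ^ i)" "real (k ^ i) \<le> (1 + \<epsilon>) * real (p ^ j)"
    using power_slightly_above_power[OF assms(1-3) \<open>\<epsilon> > 0\<close>] .
  have small: "\<forall>\<^sub>F N in sequentially.
      real (p ^ j) + 2 * (log p (real k * real N) + 1) \<le> \<delta> / 2 * real N"
    using \<open>\<delta> > 0\<close> assms by real_asymp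
  show "\<forall>\<^sub>F N in sequentially. real (card (?B \<inter> {..<N})) \<le> \<delta> * real N"
    using small eventually_gt_at_top[of 0]
  proof eventually_elim
    case (elim N)
    have "?B \<inter> {..<N} \<subseteq> {..<p ^ j} \<union> (near_powers k p \<epsilon> \<inter> {..<N})"
      using largest_le_mult_exceptions_subset[OF assms(2-4) approx] by blast
    then have "card (?B \<inter> {..<N}) \<le> card ({..<p ^ j} \<union> (near_powers k p \<epsilon> \<inter> {..<N}))"
      by (intro card_mono) simp_all
    also have "\<dots> \<le> p ^ j + card (near_powers k p \<epsilon> \<inter> {..<N})"
      using card_Un_le[of "{..<p ^ j}"] by simp
    finally have "card (?B \<inter> {..<N}) \<le> p ^ j + card (near_powers k p \<epsilon> \<inter> {..<N})" .
    then have "real (card (?B \<inter> {..<N})) \<le> real (p ^ j) + real (card (near_powers k p \<epsilon> \<inter> {..<N}))"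
      by linarith
    also have "\<dots> \<le> real (p ^ j) + \<epsilon> * real (p * k * N) + 2 * (log p (real (k * N)) + 1)"
      using card_near_powers_le[of k p \<epsilon> N] assms \<open>\<epsilon> > 0\<close> \<open>N > 0\<close> by simp
    also have "\<epsilon> * real (p * k * N) = \<delta> / 2 * real N"
      using assms by (simp add: \<epsilon>_def)
    finally show ?case
      using elim by simp
  qed
qed

lemma hamming_eq_mult_powers: "hamming = mult_powers 2 3"
  unfolding hamming_def mult_powers_def ..

lemma one_in_hamming: "1 \<in> hamming"
  unfolding hamming_eq_mult_powers by (rule one_in_mult_powers)

lemma infinite_hamming: "infinite hamming"
proof -
  have "range (\<lambda>x. (2::nat) ^ x * 3 ^ 0) \<subseteq> hamming"
    unfolding hamming_eq_mult_powers using power_mult_power_in_mult_powers by blast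
  moreover have "infinite (range (\<lambda>x. (2::nat) ^ x * 3 ^ 0))"
    by (rule range_inj_infinite) (simp add: inj_def)
  ultimately show ?thesis
    using infinite_super by blast
qed

lemma two_three_exponents_unique:
  assumes "(2::nat) ^ a * 3 ^ b = 2 ^ c * 3 ^ d"
  shows "a = c \<and> b = d"
proof -
  have "multiplicity 2 ((2::nat) ^ x * 3 ^ y) = x" for x y
    by (simp add: prime_elem_multiplicity_mult_distrib not_dvd_imp_multiplicity_0)
  then have "a = c"
    using assms by metis
  with assms show ?thesis
    by simp
qed

lemma the_enumerate_index:
  fixes S :: "nat set"
  assumes "infinite S" "enumerate S i \<le> n" "n < enumerate S (Suc i)"
  shows "(THE i. enumerate S i \<le> n \<and> n < enumerate S (Suc i)) = i"
proof (rule the_equality)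
  fix i' assume i': "enumerate S i' \<le> n \<and> n < enumerate S (Suc i')"
  have mono: "strict_mono (enumerate S)"
    using \<open>infinite S\<close> by (simp add: strict_mono_def enumerate_mono)
  show "i' = i"
  proof (rule ccontr)
    assume "i' \<noteq> i"
    then have "Suc i' \<le> i \<or> Suc i \<le> i'"
      by linarith
    then show False
      using i' assms(2,3) strict_mono_less_eq[OF mono] by (meson le_trans not_le)
  qed
qed (use assms in simp)

lemma f43_eq_neg_one_power:
  assumes "n \<ge> 1" "largest_le hamming n = 2 ^ a * 3 ^ b"
  shows "f43 n = (-1) ^ (a + b)"
proof -
  have "largest_le hamming n \<in> hamming" "largest_le hamming n \<le> n"
    using one_in_hamming \<open>n \<ge> 1\<close> by (blast intro: largest_le_in largest_le_le)+
  then obtain i where i: "hamH i = largest_le hamming n"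
    unfolding hamH_def using enumerate_Ex[OF infinite_hamming] by metis
  have "hamH (Suc i) \<in> hamming" "hamH i < hamH (Suc i)"
    unfolding hamH_def using infinite_hamming by (simp_all add: enumerate_in_set enumerate_mono)
  then have "n < hamH (Suc i)"
    using le_largest_le[of "hamH (Suc i)" hamming n] i by linarith
  then have "(THE i. hamH i \<le> n \<and> n < hamH (Suc i)) = i"
    unfolding hamH_def using \<open>largest_le hamming n \<le> n\<close> i
    by (intro the_enumerate_index[OF infinite_hamming]) (simp_all add: hamH_def)
  then have "f43 n = (-1) ^ (hexp_alpha i + hexp_beta i)"
    using \<open>n \<ge> 1\<close> by (simp add: f43_def)
  moreover have "(THE (a', b'). hamH i = 2 ^ a' * 3 ^ b') = (a, b)"
  proof (rule the_equality)
    fix x assume x: "case x of (a', b') \<Rightarrow> hamH i = 2 ^ a' * 3 ^ b'"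
    obtain a' b' where "x = (a', b')"
      by (cases x)
    then have "2 ^ a * 3 ^ b = (2::nat) ^ a' * 3 ^ b'"
      using x i assms(2) by simp
    then show "x = (a, b)"
      using \<open>x = (a', b')\<close> two_three_exponents_unique by blast
  qed (use i assms(2) in simp)
  then have "hexp_alpha i = a" "hexp_beta i = b"
    by (simp_all add: hexp_alpha_def hexp_beta_def)
  ultimately show ?thesis
    by simp
qed

lemma asym_eq_f43_neg:
  assumes "k \<in> {2, 3}" "r < k"
  shows "asym_eq (\<lambda>n. f43 (k * n + r)) (\<lambda>n. - f43 n)"
proof -
  obtain p where p: "coprime k p" "p \<ge> 2" "mult_powers k p = hamming"
  proof (cases "k = 2")
    case True
    then show ?thesis
      by (intro that[of 3]) (simp_all add: hamming_eq_mult_powers)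
  next
    case False
    then have "k = 3"
      using assms(1) by simp
    then show ?thesis
      by (intro that[of 2]) (simp_all add: hamming_eq_mult_powers mult_powers_commute)
  qed
  have "k \<ge> 2"
    using assms(1) by auto
  have exceptions: "{n. f43 (k * n + r) \<noteq> - f43 n}
      \<subseteq> {0} \<union> {n. largest_le hamming (k * n + r) \<noteq> k * largest_le hamming n}"
  proof (rule subsetI, rule ccontr)
    fix n assume "n \<in> {n. f43 (k * n + r) \<noteq> - f43 n}"
      and "n \<notin> {0} \<union> {n. largest_le hamming (k * n + r) \<noteq> k * largest_le hamming n}"
    then have "f43 (k * n + r) \<noteq> - f43 n" "n \<ge> 1"
      and scaled: "largest_le hamming (k * n + r) = k * largest_le hamming n"
      by auto
    have "largest_le hamming n \<in> hamming"
        using largest_le_in[OF one_in_hamming \<open>n \<ge> 1\<close>] .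
    then obtain a b where ab: "largest_le hamming n = 2 ^ a * 3 ^ b"
      unfolding hamming_def by blast
    have "k * n + r \<ge> 1"
      using \<open>n \<ge> 1\<close> \<open>k \<ge> 2\<close> by (simp add: trans_le_add1)
    have "f43 n = (-1) ^ (a + b)"
      by (rule f43_eq_neg_one_power[OF \<open>n \<ge> 1\<close> ab])
    moreover have "f43 (k * n + r) = (-1) ^ Suc (a + b)"
    proof (cases "k = 2")
      case True
      then have "largest_le hamming (k * n + r) = 2 ^ Suc a * 3 ^ b"
        using scaled ab by simp
      then have "f43 (k * n + r) = (-1) ^ (Suc a + b)"
        by (rule f43_eq_neg_one_power[OF \<open>k * n + r \<ge> 1\<close>])
      then show ?thesis
        by simp
    next
      case False
      then have "largest_le hamming (k * n + r) = 2 ^ a * 3 ^ Suc b"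
        using assms(1) scaled ab by simp
      then have "f43 (k * n + r) = (-1) ^ (a + Suc b)"
        by (rule f43_eq_neg_one_power[OF \<open>k * n + r \<ge> 1\<close>])
      then show ?thesis
        by simp
    qed
    ultimately have "f43 (k * n + r) = - f43 n"
      by simp
    with \<open>f43 (k * n + r) \<noteq> - f43 n\<close> show False ..
  qed
  have "zero_density {0}"
    by (simp add: zero_density_finite)
  moreover have "zero_density {n. largest_le hamming (k * n + r) \<noteq> k * largest_le hamming n}"
    using zero_density_largest_le_mult_ne[OF p(1) \<open>k \<ge> 2\<close> p(2) assms(2)] p(3) by simp
  ultimately
  have "zero_density ({0} \<union> {n. largest_le hamming (k * n + r) \<noteq> k * largest_le hamming n})"
    by (rule zero_density_Un)
  then show ?thesis
    unfolding asym_eq_iff_zero_density using exceptions by (rule zero_density_subset)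
qed

theorem proposition4p3:
  shows "asym_automatic 2 f43 \<and> asym_automatic 3 f43"
proof -
  have "asym_automatic k f43" if "k \<in> {2, 3}" for k
    using that by (intro asym_automatic_if_asym_eq_neg asym_eq_f43_neg) auto
  then show ?thesis
    by simp
qed

end
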